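(* The QDP implementation of the Grover search using density matrix exponentiation generates a sequence of states $\rho_n\in\mathcal{S}_{\mathrm{rel}}$ for all $n\in\mathbb{N}$ whenever $\rho_0=\psi_0\in\mathcal{S}_{\mathrm{rel}}$.
   Context: $|\tau\rangle$ (target) and $|\psi_0\rangle$ (initial) are pure states, $\psi_0=|\psi_0\rangle\langle\psi_0|$; $\mathcal{H}_{\mathrm{rel}}=\mathrm{span}\{|\tau\rangle,|\tau^\perp\rangle\}$ with $|\tau^\perp\rangle\propto|\psi_0\rangle-\langle\tau|\psi_0\rangle|\tau\rangle$; $\mathcal{S}_{\mathrm{rel}}$ is the set of density matrices supported in $\mathcal{H}_{\mathrm{rel}}$. In the QDP implementation of the Grover search, each recursion step maps the current state $\rho_{n-1}$ to $\rho_n$ by a composition of (a) exact partial reflections about the target, $\sigma\mapsto E_s(\tau)\sigma E_s(\tau)^\dagger$ with $E_s(\tau)=\mathbf{1}-(1-e^{-is})|\tau\rangle\langle\tau|$, and (b) density matrix exponentiation channels $\hat E_s^{\rho_{n-1}}(\sigma)=\cos^2(s)\sigma-i\sin(s)\cos(s)[\rho_{n-1},\sigma]+\sin^2(s)\rho_{n-1}$ instructed by copies of $\rho_{n-1}$. *)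

theory Defs
  imports "HOL-Analysis.Analysis"
begin

type_synonym 'n cvec = "complex ^ 'n"
type_synonym 'n cmat = "complex ^ 'n ^ 'n"

definition cinner :: "'n::finite cvec \<Rightarrow> 'n cvec \<Rightarrow> complex" where
  "cinner x y = (\<Sum>i\<in>UNIV. cnj (x $ i) * y $ i)"

definition ketbra :: "'n::finite cvec \<Rightarrow> 'n cvec \<Rightarrow> 'n cmat" where
  "ketbra x y = (\<chi> i j. x $ i * cnj (y $ j))"

definition adj :: "'n::finite cmat \<Rightarrow> 'n cmat" where
  "adj A = (\<chi> i j. cnj (A $ j $ i))"

definition smat :: "complex \<Rightarrow> 'n::finite cmat \<Rightarrow> 'n cmat" where
  "smat c A = (\<chi> i j. c * A $ i $ j)"

definition mtrace :: "'n::finite cmat \<Rightarrow> complex" where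
  "mtrace A = (\<Sum>i\<in>UNIV. A $ i $ i)"

definition density_matrix :: "'n::finite cmat \<Rightarrow> bool" where
  "density_matrix \<rho> \<longleftrightarrow> adj \<rho> = \<rho> \<and>
     (\<forall>x. Im (cinner x (\<rho> *v x)) = 0 \<and> Re (cinner x (\<rho> *v x)) \<ge> 0) \<and>
     mtrace \<rho> = 1"

text \<open>|tau_perp> (unnormalised): |psi0> - <tau|psi0> |tau>\<close>
definition tau_perp :: "'n::finite cvec \<Rightarrow> 'n cvec \<Rightarrow> 'n cvec" where
  "tau_perp \<tau> \<psi>0 = \<psi>0 - cinner \<tau> \<psi>0 *s \<tau>"

definition H_rel :: "'n::finite cvec \<Rightarrow> 'n cvec \<Rightarrow> 'n cvec set" where
  "H_rel \<tau> \<psi>0 = {a *s \<tau> + b *s tau_perp \<tau> \<psi>0 | a b. True}"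

definition S_rel :: "'n::finite cvec \<Rightarrow> 'n cvec \<Rightarrow> 'n cmat set" where
  "S_rel \<tau> \<psi>0 = {\<rho>. density_matrix \<rho> \<and> range (\<lambda>x. \<rho> *v x) \<subseteq> H_rel \<tau> \<psi>0}"

definition E_refl :: "real \<Rightarrow> 'n::finite cvec \<Rightarrow> 'n cmat" where
  "E_refl s \<tau> = mat 1 - smat (1 - exp (- \<i> * complex_of_real s)) (ketbra \<tau> \<tau>)"

definition refl_channel :: "real \<Rightarrow> 'n::finite cvec \<Rightarrow> 'n cmat \<Rightarrow> 'n cmat" where
  "refl_channel s \<tau> \<sigma> = E_refl s \<tau> ** \<sigma> ** adj (E_refl s \<tau>)"

definition dme_channel :: "real \<Rightarrow> 'n::finite cmat \<Rightarrow> 'n cmat \<Rightarrow> 'n cmat" where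
  "dme_channel s \<rho> \<sigma> =
     smat (complex_of_real ((cos s)\<^sup>2)) \<sigma>
     - smat (\<i> * complex_of_real (sin s * cos s)) (\<rho> ** \<sigma> - \<sigma> ** \<rho>)
     + smat (complex_of_real ((sin s)\<^sup>2)) \<rho>"

datatype qdp_op = Refl real | DME real

fun apply_op :: "'n::finite cvec \<Rightarrow> 'n cmat \<Rightarrow> qdp_op \<Rightarrow> 'n cmat \<Rightarrow> 'n cmat" where
  "apply_op \<tau> \<rho> (Refl s) \<sigma> = refl_channel s \<tau> \<sigma>"
| "apply_op \<tau> \<rho> (DME s) \<sigma> = dme_channel s \<rho> \<sigma>"

text \<open>One recursion step: the list of operations is applied (head first) to
  the current state rho_{n-1}, with the DME channels instructed by rho_{n-1}.\<close>
definition qdp_step :: "'n::finite cvec \<Rightarrow> qdp_op list \<Rightarrow> 'n cmat \<Rightarrow> 'n cmat" where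
  "qdp_step \<tau> ops \<rho> = fold (apply_op \<tau> \<rho>) ops \<rho>"

end

theory Submission
  imports Defs
begin

text \<open>Both kinds of channels preserve the density matrices whose range lies in
  \<open>H_rel\<close>, so the claim follows by induction from \<open>\<psi>0 \<in> H_rel\<close>. The partial
  reflection is a unitary conjugation by an operator mapping \<open>H_rel\<close> into itself.
  The DME channel \<open>D\<close> obviously has range in \<open>H_rel\<close>; for its positivity write
  \<open>\<langle>x, D x\<rangle> = cos\<^sup>2 s \<langle>x,\<sigma>x\<rangle> + sin\<^sup>2 s \<langle>x,\<rho>x\<rangle> + 2 sin s cos s Im \<langle>x,\<rho>\<sigma>x\<rangle>\<close>,
  expand \<open>\<langle>x,\<sigma>x\<rangle> = \<Sum>\<^sub>j \<rho>\<^sub>j\<^sub>j \<langle>x,\<sigma>x\<rangle>\<close> and \<open>\<langle>x,\<rho>x\<rangle> = \<Sum>\<^sub>j \<sigma>\<^sub>j\<^sub>j \<langle>x,\<rho>x\<rangle>\<close> using unit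
  traces, and bound each summand from below by AM-GM combined with the
  Cauchy-Schwarz inequality for the positive forms of \<open>\<rho>\<close> and \<open>\<sigma>\<close>.\<close>

lemma cinner_add_left [simp]: "cinner (x + y) z = cinner x z + cinner y z"
  by (simp add: cinner_def sum.distrib algebra_simps)

lemma cinner_add_right [simp]: "cinner z (x + y) = cinner z x + cinner z y"
  by (simp add: cinner_def sum.distrib algebra_simps)

lemma cinner_diff_left [simp]: "cinner (x - y) z = cinner x z - cinner y z"
  by (simp add: cinner_def sum_subtractf algebra_simps)

lemma cinner_diff_right [simp]: "cinner z (x - y) = cinner z x - cinner z y"
  by (simp add: cinner_def sum_subtractf algebra_simps)

lemma cinner_scale_left [simp]: "cinner (c *s x) z = cnj c * cinner x z"
  by (simp add: cinner_def sum_distrib_left algebra_simps)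

lemma cinner_scale_right [simp]: "cinner z (c *s x) = c * cinner z x"
  by (simp add: cinner_def sum_distrib_left algebra_simps)

lemma cinner_commute: "cinner y x = cnj (cinner x y)"
  by (simp add: cinner_def mult.commute)

lemma cinner_axis_left [simp]: "cinner (axis j 1) v = v $ j"
  by (simp add: cinner_def axis_def if_distrib if_distribR cong: if_cong)

lemma matrix_vector_mult_axis_component [simp]: "(A *v axis j 1) $ i = A $ i $ j"
  for A :: "'a::semiring_1^'m::finite^'n"
  by (simp add: matrix_vector_mult_def axis_def if_distrib if_distribR cong: if_cong)

lemma smat_matrix_vector_mult [simp]: "smat c A *v x = c *s (A *v x)"
  by (simp add: vec_eq_iff matrix_vector_mult_def smat_def sum_distrib_left algebra_simps)

lemma ketbra_matrix_vector_mult [simp]: "ketbra a b *v x = cinner b x *s a"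
  by (simp add: vec_eq_iff matrix_vector_mult_def ketbra_def cinner_def
      sum_distrib_left sum_distrib_right algebra_simps)

lemma cinner_adj: "cinner x (A *v y) = cinner (adj A *v x) y"
proof -
  have "cinner x (A *v y) = (\<Sum>i\<in>UNIV. \<Sum>j\<in>UNIV. cnj (x$i) * A$i$j * y$j)"
    by (simp add: cinner_def matrix_vector_mult_def sum_distrib_left mult.assoc)
  also have "\<dots> = (\<Sum>j\<in>UNIV. \<Sum>i\<in>UNIV. cnj (x$i) * A$i$j * y$j)"
    by (rule sum.swap)
  also have "\<dots> = cinner (adj A *v x) y"
    by (simp add: cinner_def matrix_vector_mult_def adj_def sum_distrib_right; simp add: algebra_simps)
  finally show ?thesis .
qed

lemma cinner_matrix_vector_expand:
  "cinner x (A *v y) = (\<Sum>j\<in>UNIV. cinner x (A *v axis j 1) * y $ j)"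
proof -
  have "cinner x (A *v y) = (\<Sum>i\<in>UNIV. \<Sum>j\<in>UNIV. cnj (x$i) * A$i$j * y$j)"
    by (simp add: cinner_def matrix_vector_mult_def sum_distrib_left mult.assoc)
  also have "\<dots> = (\<Sum>j\<in>UNIV. \<Sum>i\<in>UNIV. cnj (x$i) * A$i$j * y$j)"
    by (rule sum.swap)
  also have "\<dots> = (\<Sum>j\<in>UNIV. cinner x (A *v axis j 1) * y $ j)"
    by (simp add: cinner_def sum_distrib_right)
  finally show ?thesis .
qed

lemma adj_adj [simp]: "adj (adj A) = A"
  by (simp add: adj_def vec_eq_iff)

lemma adj_matrix_mult: "adj (A ** B) = adj B ** adj A"
  by (simp add: adj_def matrix_matrix_mult_def vec_eq_iff mult.commute)

lemma adj_add: "adj (A + B) = adj A + adj B"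
  by (simp add: adj_def vec_eq_iff)

lemma adj_diff: "adj (A - B) = adj A - adj B"
  by (simp add: adj_def vec_eq_iff)

lemma adj_smat: "adj (smat c A) = smat (cnj c) (adj A)"
  by (simp add: adj_def smat_def vec_eq_iff)

lemma adj_ketbra: "adj (ketbra a b) = ketbra b a"
  by (simp add: adj_def ketbra_def vec_eq_iff)

lemma adj_mat_1: "adj (mat 1) = mat 1"
  by (simp add: adj_def mat_def vec_eq_iff)

lemma mtrace_add: "mtrace (A + B) = mtrace A + mtrace B"
  by (simp add: mtrace_def sum.distrib)

lemma mtrace_diff: "mtrace (A - B) = mtrace A - mtrace B"
  by (simp add: mtrace_def sum_subtractf)

lemma mtrace_smat: "mtrace (smat c A) = c * mtrace A"
  by (simp add: mtrace_def smat_def sum_distrib_left)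

lemma mtrace_ketbra: "mtrace (ketbra a b) = cinner b a"
  by (simp add: mtrace_def ketbra_def cinner_def mult.commute)

lemma mtrace_matrix_mult_commute: "mtrace (A ** B) = mtrace (B ** A)"
  unfolding mtrace_def matrix_matrix_mult_def
  by (simp, subst sum.swap, simp add: mult.commute)

lemma hermitian_cinner_swap:
  assumes "adj A = A"
  shows "cinner y (A *v x) = cnj (cinner x (A *v y))"
  by (metis assms cinner_adj cinner_commute)

lemma hermitian_cinner_mult_commute:
  assumes "adj A = A" and "adj B = B"
  shows "cinner x (B *v (A *v x)) = cnj (cinner x (A *v (B *v x)))"
  by (metis assms cinner_adj cinner_commute)

definition positive_semidefinite :: "'n::finite cmat \<Rightarrow> bool" where
  "positive_semidefinite A \<longleftrightarrow>
     (\<forall>x. Im (cinner x (A *v x)) = 0 \<and> Re (cinner x (A *v x)) \<ge> 0)"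

lemma density_matrix_iff:
  "density_matrix \<rho> \<longleftrightarrow> adj \<rho> = \<rho> \<and> positive_semidefinite \<rho> \<and> mtrace \<rho> = 1"
  by (simp add: density_matrix_def positive_semidefinite_def)

lemma positive_semidefinite_cinner_real:
  "positive_semidefinite A \<Longrightarrow> cinner x (A *v x) = of_real (Re (cinner x (A *v x)))"
  unfolding positive_semidefinite_def by (simp add: complex_eq_iff)

lemma positive_semidefinite_cinner_nonneg:
  "positive_semidefinite A \<Longrightarrow> Re (cinner x (A *v x)) \<ge> 0"
  unfolding positive_semidefinite_def by blast

lemma le_mult_of_quadratic_nonneg:
  fixes a b m :: real
  assumes quadratic: "\<And>r. 0 \<le> a - 2 * r * m + r^2 * m * b" and "b \<ge> 0"
  shows "m \<le> a * b"
proof (cases "b = 0")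
  case True
  have "m = 0"
  proof (rule ccontr)
    assume "m \<noteq> 0"
    then have "2 * ((a + 1) / (2 * m)) * m = a + 1" by simp
    then show False using quadratic[of "(a + 1) / (2 * m)"] True by simp
  qed
  then show ?thesis using True by simp
next
  case False
  then have "b > 0" using \<open>b \<ge> 0\<close> by simp
  have "0 \<le> a - 2 * (1 / b) * m + (1 / b)^2 * m * b" by (rule quadratic)
  also have "\<dots> = a - m / b" using \<open>b > 0\<close> by (simp add: field_simps power2_eq_square)
  finally show ?thesis using \<open>b > 0\<close> by (simp add: field_simps mult.commute)
qed

lemma positive_semidefinite_cauchy_schwarz:
  assumes herm: "adj A = A" and psd: "positive_semidefinite A"
  shows "(cmod (cinner x (A *v y)))^2 \<le> Re (cinner x (A *v x)) * Re (cinner y (A *v y))"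
proof -
  define z where "z = cinner x (A *v y)"
  define a where "a = Re (cinner x (A *v x))"
  define b where "b = Re (cinner y (A *v y))"
  define m where "m = (cmod z)^2"
  have "0 \<le> a - 2 * r * m + r^2 * m * b" for r
  proof -
    define t where "t = - (of_real r * cnj z)"
    have "0 \<le> Re (cinner (x + t *s y) (A *v (x + t *s y)))"
      using psd by (rule positive_semidefinite_cinner_nonneg)
    also have "cinner (x + t *s y) (A *v (x + t *s y)) = cinner x (A *v x) + t * z
        + cnj t * cnj z + cnj t * t * cinner y (A *v y)"
      using hermitian_cinner_swap[OF herm, of y x]
      by (simp add: z_def matrix_vector_right_distrib vector_scalar_commute algebra_simps)
    also have "\<dots> = of_real a - 2 * of_real r * (z * cnj z) + of_real (r^2) * (z * cnj z) * of_real b"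
      using positive_semidefinite_cinner_real[OF psd, of x]
        positive_semidefinite_cinner_real[OF psd, of y]
      by (simp add: t_def a_def b_def algebra_simps power2_eq_square)
    also have "\<dots> = of_real (a - 2 * r * m + r^2 * m * b)"
      unfolding m_def complex_norm_square[symmetric] by simp
    finally show ?thesis by simp
  qed
  moreover have "b \<ge> 0"
    using psd unfolding b_def by (rule positive_semidefinite_cinner_nonneg)
  ultimately show ?thesis
    using le_mult_of_quadratic_nonneg[of a m b] by (simp add: m_def z_def a_def b_def)
qed

lemma abs_Im_mult_le_amgm:
  fixes c s p q r t :: real and \<alpha> \<beta> :: complex
  assumes "p \<ge> 0" "q \<ge> 0" "r \<ge> 0" "t \<ge> 0"
    and "(cmod \<alpha>)^2 \<le> r * p" "(cmod \<beta>)^2 \<le> t * q"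
  shows "\<bar>2 * s * c * Im (\<alpha> * \<beta>)\<bar> \<le> c^2 * p * q + s^2 * r * t"
proof -
  define w where "w = \<alpha> * \<beta>"
  have "(Im w)^2 \<le> (cmod w)^2"
    by (metis abs_Im_le_cmod abs_ge_zero power2_abs power_mono)
  then have "(2 * s * c * Im w)^2 \<le> 4 * s^2 * c^2 * (cmod w)^2"
    by (simp add: power_mult_distrib mult_left_mono)
  also have "\<dots> \<le> 4 * s^2 * c^2 * ((r * p) * (t * q))"
    unfolding w_def norm_mult power_mult_distrib
    by (intro mult_left_mono mult_mono) (use assms in auto)
  also have "\<dots> \<le> (c^2 * p * q + s^2 * r * t)^2"
    using zero_le_power2[of "c^2 * p * q - s^2 * r * t"]
    by (simp add: power2_eq_square algebra_simps)
  finally have "(2 * s * c * Im w)^2 \<le> (c^2 * p * q + s^2 * r * t)^2" .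
  moreover have "0 \<le> c^2 * p * q + s^2 * r * t"
    using assms by simp
  ultimately show ?thesis
    unfolding w_def by (metis power2_abs power2_le_imp_le)
qed

lemma cinner_dme_channel:
  assumes herm: "adj \<rho> = \<rho>" "adj \<sigma> = \<sigma>"
    and psd: "positive_semidefinite \<rho>" "positive_semidefinite \<sigma>"
  shows "cinner x (dme_channel \<theta> \<rho> \<sigma> *v x) = of_real ((cos \<theta>)^2 * Re (cinner x (\<sigma> *v x))
    + (sin \<theta>)^2 * Re (cinner x (\<rho> *v x)) + 2 * sin \<theta> * cos \<theta> * Im (cinner x (\<rho> *v (\<sigma> *v x))))"
proof -
  define w where "w = cinner x (\<rho> *v (\<sigma> *v x))"
  have "cinner x (dme_channel \<theta> \<rho> \<sigma> *v x) = of_real ((cos \<theta>)^2) * cinner x (\<sigma> *v x)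
      - \<i> * of_real (sin \<theta> * cos \<theta>) * (w - cnj w) + of_real ((sin \<theta>)^2) * cinner x (\<rho> *v x)"
    using hermitian_cinner_mult_commute[OF herm, of x]
    by (simp add: dme_channel_def w_def matrix_vector_mult_add_rdistrib
        matrix_vector_mult_diff_rdistrib matrix_vector_mul_assoc algebra_simps)
  moreover obtain R Q where "cinner x (\<rho> *v x) = of_real R" and "cinner x (\<sigma> *v x) = of_real Q"
    using psd positive_semidefinite_cinner_real by metis
  ultimately show ?thesis
    by (simp add: w_def complex_eq_iff)
qed

lemma dme_quadratic_form_nonneg:
  fixes c s :: real
  assumes "density_matrix \<rho>" and "density_matrix \<sigma>"
  shows "0 \<le> c^2 * Re (cinner x (\<sigma> *v x)) + s^2 * Re (cinner x (\<rho> *v x))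
    + 2 * s * c * Im (cinner x (\<rho> *v (\<sigma> *v x)))"
proof -
  let ?e = "\<lambda>j. axis j (1::complex)"
  have herm: "adj \<rho> = \<rho>" "adj \<sigma> = \<sigma>" and psd: "positive_semidefinite \<rho>" "positive_semidefinite \<sigma>"
    and tr: "mtrace \<rho> = 1" "mtrace \<sigma> = 1"
    using assms by (simp_all add: density_matrix_iff)
  define \<alpha> where "\<alpha> j = cinner x (\<rho> *v ?e j)" for j
  define \<beta> where "\<beta> j = (\<sigma> *v x) $ j" for j
  define P where "P j = Re (\<rho> $ j $ j)" for j
  define T where "T j = Re (\<sigma> $ j $ j)" for j
  define R where "R = Re (cinner x (\<rho> *v x))"
  define Q where "Q = Re (cinner x (\<sigma> *v x))"
  have summand_nonneg: "0 \<le> c^2 * P j * Q + s^2 * R * T j + 2 * s * c * Im (\<alpha> j * \<beta> j)" for j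
  proof -
    have "(cmod (\<alpha> j))^2 \<le> R * P j"
      using positive_semidefinite_cauchy_schwarz[OF herm(1) psd(1), of x "?e j"]
      by (simp add: \<alpha>_def R_def P_def)
    moreover have "(cmod (\<beta> j))^2 \<le> T j * Q"
      using positive_semidefinite_cauchy_schwarz[OF herm(2) psd(2), of "?e j" x]
      by (simp add: \<beta>_def T_def Q_def)
    moreover have "P j \<ge> 0" "T j \<ge> 0" "R \<ge> 0" "Q \<ge> 0"
      using positive_semidefinite_cinner_nonneg[OF psd(1), of "?e j"]
        positive_semidefinite_cinner_nonneg[OF psd(2), of "?e j"]
        positive_semidefinite_cinner_nonneg[OF psd(1), of x]
        positive_semidefinite_cinner_nonneg[OF psd(2), of x]
      by (simp_all add: P_def T_def R_def Q_def)
    ultimately show ?thesis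
      using abs_Im_mult_le_amgm[of "P j" Q R "T j" "\<alpha> j" "\<beta> j" s c] by linarith
  qed
  have "(\<Sum>j\<in>UNIV. P j) = 1" "(\<Sum>j\<in>UNIV. T j) = 1"
    using arg_cong[OF tr(1), of Re] arg_cong[OF tr(2), of Re]
    by (simp_all add: P_def T_def mtrace_def Re_sum)
  moreover have "Im (cinner x (\<rho> *v (\<sigma> *v x))) = (\<Sum>j\<in>UNIV. Im (\<alpha> j * \<beta> j))"
    unfolding \<alpha>_def \<beta>_def cinner_matrix_vector_expand[of x \<rho> "\<sigma> *v x"]
    by (simp add: Im_sum)
  ultimately have "c^2 * Q + s^2 * R + 2 * s * c * Im (cinner x (\<rho> *v (\<sigma> *v x))) =
      c^2 * (\<Sum>j\<in>UNIV. P j) * Q + s^2 * R * (\<Sum>j\<in>UNIV. T j)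
      + 2 * s * c * (\<Sum>j\<in>UNIV. Im (\<alpha> j * \<beta> j))"
    by simp
  also have "\<dots> = (\<Sum>j\<in>UNIV. c^2 * P j * Q + s^2 * R * T j + 2 * s * c * Im (\<alpha> j * \<beta> j))"
    by (simp only: sum.distrib flip: sum_distrib_left sum_distrib_right)
  also have "\<dots> \<ge> 0"
    by (rule sum_nonneg) (rule summand_nonneg)
  finally show ?thesis
    by (simp add: R_def Q_def)
qed

lemma positive_semidefinite_dme_channel:
  assumes "density_matrix \<rho>" and "density_matrix \<sigma>"
  shows "positive_semidefinite (dme_channel \<theta> \<rho> \<sigma>)"
  unfolding positive_semidefinite_def
proof
  fix x
  have "adj \<rho> = \<rho>" "adj \<sigma> = \<sigma>" "positive_semidefinite \<rho>" "positive_semidefinite \<sigma>"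
    using assms by (simp_all add: density_matrix_iff)
  then show "Im (cinner x (dme_channel \<theta> \<rho> \<sigma> *v x)) = 0 \<and> 0 \<le> Re (cinner x (dme_channel \<theta> \<rho> \<sigma> *v x))"
    using dme_quadratic_form_nonneg[OF assms, where c = "cos \<theta>" and s = "sin \<theta>"]
    by (simp add: cinner_dme_channel)
qed

lemma density_matrix_dme_channel:
  assumes "density_matrix \<rho>" and "density_matrix \<sigma>"
  shows "density_matrix (dme_channel \<theta> \<rho> \<sigma>)"
proof -
  have herm: "adj \<rho> = \<rho>" "adj \<sigma> = \<sigma>" and tr: "mtrace \<rho> = 1" "mtrace \<sigma> = 1"
    using assms by (simp_all add: density_matrix_iff)
  have "adj (dme_channel \<theta> \<rho> \<sigma>) = dme_channel \<theta> \<rho> \<sigma>"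
    unfolding dme_channel_def
    by (simp add: adj_add adj_diff adj_smat adj_matrix_mult herm) (simp add: vec_eq_iff smat_def algebra_simps)
  moreover have "(of_real (cos \<theta>))\<^sup>2 + (of_real (sin \<theta>))\<^sup>2 = (1::complex)"
    by (metis of_real_1 of_real_add of_real_power sin_cos_squared_add2)
  then have "mtrace (dme_channel \<theta> \<rho> \<sigma>) = 1"
    using mtrace_matrix_mult_commute[of \<rho> \<sigma>] tr
    by (simp add: dme_channel_def mtrace_add mtrace_diff mtrace_smat)
  ultimately show ?thesis
    using positive_semidefinite_dme_channel[OF assms] by (simp add: density_matrix_iff)
qed

lemma density_matrix_unitary_conj:
  assumes unitary: "adj U ** U = mat 1" and "density_matrix \<sigma>"
  shows "density_matrix (U ** \<sigma> ** adj U)"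
proof -
  have herm: "adj \<sigma> = \<sigma>" and psd: "positive_semidefinite \<sigma>" and tr: "mtrace \<sigma> = 1"
    using assms(2) by (simp_all add: density_matrix_iff)
  have "adj (U ** \<sigma> ** adj U) = U ** \<sigma> ** adj U"
    by (simp add: adj_matrix_mult herm matrix_mul_assoc)
  moreover have "mtrace (U ** \<sigma> ** adj U) = 1"
    using mtrace_matrix_mult_commute[of "U ** \<sigma>" "adj U"] tr
    by (simp add: matrix_mul_assoc unitary)
  moreover have "cinner x ((U ** \<sigma> ** adj U) *v x) = cinner (adj U *v x) (\<sigma> *v (adj U *v x))" for x
    by (simp only: matrix_vector_mul_assoc[symmetric] cinner_adj[of x U])
  then have "positive_semidefinite (U ** \<sigma> ** adj U)"
    using psd unfolding positive_semidefinite_def by simp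
  ultimately show ?thesis by (simp add: density_matrix_iff)
qed

lemma E_refl_matrix_vector_mult:
  "E_refl s \<tau> *v x = x - ((1 - exp (- \<i> * of_real s)) * cinner \<tau> x) *s \<tau>"
  by (simp add: E_refl_def matrix_vector_mult_diff_rdistrib vector_smult_assoc)

lemma adj_E_refl_matrix_vector_mult:
  "adj (E_refl s \<tau>) *v x = x - (cnj (1 - exp (- \<i> * of_real s)) * cinner \<tau> x) *s \<tau>"
  by (simp add: E_refl_def adj_diff adj_smat adj_ketbra adj_mat_1
      matrix_vector_mult_diff_rdistrib vector_smult_assoc)

lemma E_refl_unitary:
  assumes "cinner \<tau> \<tau> = 1"
  shows "adj (E_refl s \<tau>) ** E_refl s \<tau> = mat 1"
proof -
  define k where "k = 1 - exp (- \<i> * of_real s)"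
  have E: "E_refl s \<tau> *v y = y - (k * cinner \<tau> y) *s \<tau>"
    and adjE: "adj (E_refl s \<tau>) *v y = y - (cnj k * cinner \<tau> y) *s \<tau>" for y
    unfolding k_def by (rule E_refl_matrix_vector_mult adj_E_refl_matrix_vector_mult)+
  have "(adj (E_refl s \<tau>) ** E_refl s \<tau>) *v x = x" for x
  proof -
    define a where "a = cinner \<tau> x"
    have "k * a + cnj k * (a - k * a) = (k + cnj k - cnj k * k) * a"
      by (simp add: algebra_simps)
    also have "\<dots> = 0"
      by (simp add: k_def exp_cnj exp_minus_inverse algebra_simps)
    finally have cancel: "k * a + cnj k * (a - k * a) = 0" .
    have "(adj (E_refl s \<tau>) ** E_refl s \<tau>) *v x = x - (k * a) *s \<tau> - (cnj k * (a - k * a)) *s \<tau>"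
      using assms
      by (simp add: E adjE a_def flip: matrix_vector_mul_assoc)
    also have "\<dots> = x - (k * a + cnj k * (a - k * a)) *s \<tau>"
      by (simp add: vec_eq_iff algebra_simps)
    finally show ?thesis by (simp add: cancel)
  qed
  then show ?thesis by (simp add: matrix_eq)
qed

lemma density_matrix_refl_channel:
  "cinner \<tau> \<tau> = 1 \<Longrightarrow> density_matrix \<sigma> \<Longrightarrow> density_matrix (refl_channel s \<tau> \<sigma>)"
  unfolding refl_channel_def by (intro density_matrix_unitary_conj E_refl_unitary)

lemma vec_span_pair: "vec.span {u, v} = {a *s u + b *s v | a b. True}"
proof -
  have "(\<exists>a b. x - a *s u = b *s v) \<longleftrightarrow> (\<exists>a b. x = a *s u + b *s v)" for x
    by (metis add.commute add_diff_cancel_right' diff_eq_eq)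
  then show ?thesis
    by (auto simp: vec.span_insert vec.span_singleton)
qed

lemma H_rel_eq_span: "H_rel \<tau> \<psi> = vec.span {\<tau>, tau_perp \<tau> \<psi>}"
  by (simp add: H_rel_def vec_span_pair)

lemma S_rel_iff:
  "\<rho> \<in> S_rel \<tau> \<psi> \<longleftrightarrow> density_matrix \<rho> \<and> (\<forall>x. \<rho> *v x \<in> vec.span {\<tau>, tau_perp \<tau> \<psi>})"
  by (auto simp: S_rel_def H_rel_eq_span)

lemma positive_semidefinite_ketbra: "positive_semidefinite (ketbra v v)"
  unfolding positive_semidefinite_def
  by (simp add: cinner_commute[of x v for x] complex_norm_square[symmetric])

lemma density_matrix_ketbra: "cinner v v = 1 \<Longrightarrow> density_matrix (ketbra v v)"
  by (simp add: density_matrix_iff adj_ketbra mtrace_ketbra positive_semidefinite_ketbra)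

lemma ketbra_in_S_rel:
  assumes "cinner \<psi> \<psi> = 1"
  shows "ketbra \<psi> \<psi> \<in> S_rel \<tau> \<psi>"
proof -
  have "\<psi> = cinner \<tau> \<psi> *s \<tau> + tau_perp \<tau> \<psi>"
    by (simp add: tau_perp_def)
  also have "\<dots> \<in> vec.span {\<tau>, tau_perp \<tau> \<psi>}"
    by (intro vec.span_add vec.span_scale) (simp_all add: vec.span_base)
  finally show ?thesis
    using assms by (simp add: S_rel_iff density_matrix_ketbra vec.span_scale)
qed

lemma S_rel_dme_channel:
  assumes "\<rho> \<in> S_rel \<tau> \<psi>" and "\<sigma> \<in> S_rel \<tau> \<psi>"
  shows "dme_channel s \<rho> \<sigma> \<in> S_rel \<tau> \<psi>"
proof -
  have "dme_channel s \<rho> \<sigma> *v x \<in> vec.span {\<tau>, tau_perp \<tau> \<psi>}" for x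
    using assms
    by (simp add: S_rel_iff dme_channel_def matrix_vector_mult_add_rdistrib
        matrix_vector_mult_diff_rdistrib vec.span_add vec.span_diff vec.span_scale
        flip: matrix_vector_mul_assoc)
  then show ?thesis
    using assms by (simp add: S_rel_iff density_matrix_dme_channel)
qed

lemma S_rel_refl_channel:
  assumes "cinner \<tau> \<tau> = 1" and "\<sigma> \<in> S_rel \<tau> \<psi>"
  shows "refl_channel s \<tau> \<sigma> \<in> S_rel \<tau> \<psi>"
proof -
  have "refl_channel s \<tau> \<sigma> *v x \<in> vec.span {\<tau>, tau_perp \<tau> \<psi>}" for x
    using assms(2)
    by (simp add: S_rel_iff refl_channel_def E_refl_matrix_vector_mult
        vec.span_diff vec.span_scale vec.span_base flip: matrix_vector_mul_assoc)
  then show ?thesis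
    using assms by (simp add: S_rel_iff density_matrix_refl_channel)
qed

lemma S_rel_qdp_step:
  assumes "cinner \<tau> \<tau> = 1" and "\<rho> \<in> S_rel \<tau> \<psi>"
  shows "qdp_step \<tau> ops \<rho> \<in> S_rel \<tau> \<psi>"
proof -
  have "fold (apply_op \<tau> \<rho>) ops \<sigma> \<in> S_rel \<tau> \<psi>" if "\<sigma> \<in> S_rel \<tau> \<psi>" for \<sigma>
    using that
  proof (induction ops arbitrary: \<sigma>)
    case (Cons op ops)
    have "apply_op \<tau> \<rho> op \<sigma> \<in> S_rel \<tau> \<psi>"
      by (cases op) (simp_all add: S_rel_refl_channel S_rel_dme_channel assms Cons.prems)
    then show ?case by (simp add: Cons.IH)
  qed simp
  then show ?thesis unfolding qdp_step_def using assms(2) .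
qed

theorem corollary1:
  fixes \<tau> \<psi>0 :: "complex ^ 'n::finite"
    and \<rho> :: "nat \<Rightarrow> complex ^ 'n ^ 'n"
    and ops :: "nat \<Rightarrow> qdp_op list"
  assumes "cinner \<tau> \<tau> = 1" and "cinner \<psi>0 \<psi>0 = 1"
    and "\<rho> 0 = ketbra \<psi>0 \<psi>0"
    and "\<And>n. \<rho> (Suc n) = qdp_step \<tau> (ops n) (\<rho> n)"
  shows "\<forall>n. \<rho> n \<in> S_rel \<tau> \<psi>0"
proof
  fix n
  show "\<rho> n \<in> S_rel \<tau> \<psi>0"
    by (induction n) (simp_all add: assms ketbra_in_S_rel S_rel_qdp_step)
qed

end
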